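(* Let $G$ be a partial cube and let $F_1$ and $F_2$ be $\Theta$-classes of $G$. Then $F_1 \cup F_2$ is an edge general position set of $G$.
   Context: Graphs are finite and connected. A graph $G$ is a partial cube if it is an isometric subgraph of some hypercube $Q_r$ (i.e., distances in $G$ equal distances in $Q_r$). The Djoković–Winkler relation $\Theta$ on the edges of $G$ is defined by: edges $xy$ and $uv$ are in relation $\Theta$ if $d_G(x,u) + d_G(y,v) \neq d_G(x,v) + d_G(y,u)$. In a partial cube, $\Theta$ is an equivalence relation, and its equivalence classes are called $\Theta$-classes. A set $S$ of edges of $G$ is an edge general position set if no geodesic (shortest path) of $G$ contains three edges of $S$. *)

theory Defs
  imports Main
begin

definition simple_graph :: "'a set \<Rightarrow> 'a set set \<Rightarrow> bool" where
  "simple_graph V E \<longleftrightarrow> finite V \<and>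
     (\<forall>e\<in>E. \<exists>x y. e = {x, y} \<and> x \<noteq> y \<and> x \<in> V \<and> y \<in> V)"

text \<open>A walk is a nonempty vertex list with consecutive vertices adjacent; its length is
  the number of edges, i.e. length p - 1.\<close>

definition walk :: "'a set \<Rightarrow> 'a set set \<Rightarrow> 'a list \<Rightarrow> bool" where
  "walk V E p \<longleftrightarrow> p \<noteq> [] \<and> set p \<subseteq> V \<and>
     (\<forall>i. Suc i < length p \<longrightarrow> {p ! i, p ! Suc i} \<in> E)"

definition connected_graph :: "'a set \<Rightarrow> 'a set set \<Rightarrow> bool" where
  "connected_graph V E \<longleftrightarrow> simple_graph V E \<and> V \<noteq> {} \<and>
     (\<forall>u\<in>V. \<forall>v\<in>V. \<exists>p. walk V E p \<and> hd p = u \<and> last p = v)"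

definition gdist :: "'a set \<Rightarrow> 'a set set \<Rightarrow> 'a \<Rightarrow> 'a \<Rightarrow> nat" where
  "gdist V E u v = (LEAST n. \<exists>p. walk V E p \<and> hd p = u \<and> last p = v \<and> length p = Suc n)"

text \<open>Partial cube: (connected) graph isometrically embeddable in a hypercube Q_r, whose
  vertices are the subsets of {0..<r} and whose distance is the size of the symmetric difference.\<close>

definition partial_cube :: "'a set \<Rightarrow> 'a set set \<Rightarrow> bool" where
  "partial_cube V E \<longleftrightarrow> connected_graph V E \<and>
     (\<exists>(r::nat) (f::'a \<Rightarrow> nat set).
        (\<forall>v\<in>V. f v \<subseteq> {0..<r}) \<and>
        (\<forall>u\<in>V. \<forall>v\<in>V. gdist V E u v = card ((f u - f v) \<union> (f v - f u))))"

definition Theta :: "'a set \<Rightarrow> 'a set set \<Rightarrow> 'a set \<Rightarrow> 'a set \<Rightarrow> bool" where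
  "Theta V E e f \<longleftrightarrow> e \<in> E \<and> f \<in> E \<and>
     (\<exists>x y u v. e = {x, y} \<and> f = {u, v} \<and>
        gdist V E x u + gdist V E y v \<noteq> gdist V E x v + gdist V E y u)"

definition Theta_class :: "'a set \<Rightarrow> 'a set set \<Rightarrow> 'a set set \<Rightarrow> bool" where
  "Theta_class V E F \<longleftrightarrow> (\<exists>e\<in>E. F = {f \<in> E. Theta V E e f})"

definition geodesic :: "'a set \<Rightarrow> 'a set set \<Rightarrow> 'a list \<Rightarrow> bool" where
  "geodesic V E p \<longleftrightarrow> walk V E p \<and> length p = Suc (gdist V E (hd p) (last p))"

definition edge_on :: "'a set \<Rightarrow> 'a list \<Rightarrow> bool" where
  "edge_on e p \<longleftrightarrow> (\<exists>i. Suc i < length p \<and> e = {p ! i, p ! Suc i})"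

definition edge_general_position :: "'a set \<Rightarrow> 'a set set \<Rightarrow> 'a set set \<Rightarrow> bool" where
  "edge_general_position V E S \<longleftrightarrow> S \<subseteq> E \<and>
     \<not> (\<exists>p e1 e2 e3. geodesic V E p \<and> e1 \<in> S \<and> e2 \<in> S \<and> e3 \<in> S \<and>
          e1 \<noteq> e2 \<and> e1 \<noteq> e3 \<and> e2 \<noteq> e3 \<and> edge_on e1 p \<and> edge_on e2 p \<and> edge_on e3 p)"

end

theory Submission
  imports Defs
begin

text \<open>Fix an isometric embedding \<open>f\<close> of the graph into a hypercube. Every edge \<open>xy\<close> flips
  exactly one coordinate, its label; \<Theta>-related edges carry the same label, since for
  edges with distinct labels the four Hamming distances satisfy
  \<open>d(x,u) + d(y,v) = d(x,v) + d(y,u)\<close>. A geodesic flips no coordinate twice: otherwise the two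
  flips cancel and the Hamming distance between its ends is smaller than its length. Hence a
  geodesic contains at most one edge of each \<Theta>-class, and so at most two edges of
  \<open>F\<^sub>1 \<union> F\<^sub>2\<close>.\<close>

lemma card_sym_diff_triangle:
  assumes "finite A" "finite B" "finite C"
  shows "card (sym_diff A C) \<le> card (sym_diff A B) + card (sym_diff B C)"
proof -
  have "card (sym_diff A C) \<le> card (sym_diff A B \<union> sym_diff B C)"
    using assms by (intro card_mono) auto
  also have "\<dots> \<le> card (sym_diff A B) + card (sym_diff B C)"
    by (rule card_Un_le)
  finally show ?thesis .
qed

lemma card_sym_diff_swap:
  assumes "finite X" "finite Y" "finite U" "finite W"
    and agree: "\<And>z. (z \<in> X \<longleftrightarrow> z \<in> Y) \<or> (z \<in> U \<longleftrightarrow> z \<in> W)"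
  shows "card (sym_diff X U) + card (sym_diff Y W) = card (sym_diff X W) + card (sym_diff Y U)"
proof -
  define K where "K = X \<union> Y \<union> U \<union> W"
  have "finite K" using assms by (simp add: K_def)
  have sub: "sym_diff X U \<subseteq> K" "sym_diff Y W \<subseteq> K" "sym_diff X W \<subseteq> K" "sym_diff Y U \<subseteq> K"
    by (auto simp: K_def)
  have card_as_sum: "card S = (\<Sum>z\<in>K. of_bool (z \<in> S))" if "S \<subseteq> K" for S
  proof -
    have "(\<Sum>z\<in>K. of_bool (z \<in> S)) = card (K \<inter> S)"
      using \<open>finite K\<close> sum_of_bool_eq[of K "\<lambda>z. z \<in> S", where 'a=nat] by simp
    with that show ?thesis by (simp add: Int_absorb1)
  qed
  have pointwise: "of_bool (z \<in> sym_diff X U) + of_bool (z \<in> sym_diff Y W)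
      = of_bool (z \<in> sym_diff X W) + (of_bool (z \<in> sym_diff Y U) :: nat)" for z
    using agree[of z] by auto
  have "card (sym_diff X U) + card (sym_diff Y W)
      = (\<Sum>z\<in>K. of_bool (z \<in> sym_diff X U) + of_bool (z \<in> sym_diff Y W))"
    by (simp only: card_as_sum sub sum.distrib)
  also have "\<dots> = (\<Sum>z\<in>K. of_bool (z \<in> sym_diff X W) + of_bool (z \<in> sym_diff Y U))"
    using pointwise by (rule sum.cong[OF refl])
  also have "\<dots> = card (sym_diff X W) + card (sym_diff Y U)"
    by (simp only: card_as_sum sub sum.distrib)
  finally show ?thesis .
qed

lemma gdist_edge:
  assumes "simple_graph V E" "{x, y} \<in> E"
  shows "gdist V E x y = 1"
proof -
  have "x \<noteq> y" "x \<in> V" "y \<in> V"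
    using assms unfolding simple_graph_def by (metis doubleton_eq_iff)+
  have "walk V E [x, y]"
    using assms(2) \<open>x \<in> V\<close> \<open>y \<in> V\<close> unfolding walk_def by (auto simp: less_Suc_eq)
  then have short: "\<exists>p. walk V E p \<and> hd p = x \<and> last p = y \<and> length p = Suc 1"
    by fastforce
  then have "gdist V E x y \<le> 1"
    unfolding gdist_def by (rule Least_le)
  moreover have "gdist V E x y \<noteq> 0"
  proof
    assume "gdist V E x y = 0"
    moreover have "\<exists>p. walk V E p \<and> hd p = x \<and> last p = y \<and> length p = Suc (gdist V E x y)"
      unfolding gdist_def by (rule LeastI_ex) (use short in blast)
    then obtain p where "hd p = x" "last p = y" "length p = Suc (gdist V E x y)"
      by blast
    ultimately show False
      using \<open>x \<noteq> y\<close> by (cases p) auto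
  qed
  ultimately show ?thesis by simp
qed

lemma walk_nth_in_vertices: "walk V E p \<Longrightarrow> k < length p \<Longrightarrow> p ! k \<in> V"
  unfolding walk_def by (meson nth_mem subsetD)

lemma walk_nth_edge: "walk V E p \<Longrightarrow> Suc k < length p \<Longrightarrow> {p ! k, p ! Suc k} \<in> E"
  unfolding walk_def by blast

lemma partial_cube_simple_graph: "partial_cube V E \<Longrightarrow> simple_graph V E"
  unfolding partial_cube_def connected_graph_def by blast

locale hypercube_embedding =
  fixes V :: "'a set" and E :: "'a set set" and f :: "'a \<Rightarrow> 'b set"
  assumes simple: "simple_graph V E"
    and finite_coordinates: "v \<in> V \<Longrightarrow> finite (f v)"
    and isometric: "u \<in> V \<Longrightarrow> v \<in> V \<Longrightarrow> gdist V E u v = card (sym_diff (f u) (f v))"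
begin

lemma edge_endpoints: "{x, y} \<in> E \<Longrightarrow> x \<in> V \<and> y \<in> V"
  using simple unfolding simple_graph_def by (metis doubleton_eq_iff)

lemma edge_label:
  assumes "{x, y} \<in> E"
  shows "\<exists>i. sym_diff (f x) (f y) = {i}"
proof -
  have "card (sym_diff (f x) (f y)) = 1"
    using gdist_edge[OF simple assms] isometric edge_endpoints[OF assms] by simp
  then show ?thesis
    by (simp add: card_1_singleton_iff)
qed

lemma Theta_same_label:
  assumes "Theta V E {x, y} {u, v}"
    and i: "sym_diff (f x) (f y) = {i}" and j: "sym_diff (f u) (f v) = {j}"
  shows "i = j"
proof (rule ccontr)
  assume "i \<noteq> j"
  from assms(1) obtain x' y' u' v' where
    "{x, y} = {x', y'}" "{u, v} = {u', v'}" "{x, y} \<in> E" "{u, v} \<in> E"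
    and not_additive: "gdist V E x' u' + gdist V E y' v' \<noteq> gdist V E x' v' + gdist V E y' u'"
    unfolding Theta_def by blast
  then have in_V: "x' \<in> V" "y' \<in> V" "u' \<in> V" "v' \<in> V"
    using edge_endpoints by auto
  have "sym_diff (f x') (f y') = {i}" "sym_diff (f u') (f v') = {j}"
    using \<open>{x, y} = {x', y'}\<close> \<open>{u, v} = {u', v'}\<close> i j
    by (auto simp: doubleton_eq_iff Un_commute)
  then have "(z \<in> f x' \<longleftrightarrow> z \<in> f y') \<or> (z \<in> f u' \<longleftrightarrow> z \<in> f v')" for z
    using \<open>i \<noteq> j\<close> by (cases "z = i") blast+
  then have "card (sym_diff (f x') (f u')) + card (sym_diff (f y') (f v'))
      = card (sym_diff (f x') (f v')) + card (sym_diff (f y') (f u'))"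
    using in_V finite_coordinates by (intro card_sym_diff_swap) auto
  with not_additive in_V show False
    by (simp add: isometric)
qed

lemma walk_card_sym_diff_le:
  assumes "walk V E p" "k \<le> l" "l < length p"
  shows "card (sym_diff (f (p ! k)) (f (p ! l))) \<le> l - k"
  using assms(2,3)
proof (induction l)
  case 0
  then show ?case by simp
next
  case (Suc l)
  show ?case
  proof (cases "k = Suc l")
    case False
    then have "k \<le> l" using Suc.prems by simp
    have in_V: "p ! k \<in> V" "p ! l \<in> V" "p ! Suc l \<in> V"
      using walk_nth_in_vertices[OF assms(1)] Suc.prems by auto
    obtain i where "sym_diff (f (p ! l)) (f (p ! Suc l)) = {i}"
      using edge_label walk_nth_edge[OF assms(1) \<open>Suc l < length p\<close>] by blast
    then have "card (sym_diff (f (p ! k)) (f (p ! Suc l)))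
        \<le> card (sym_diff (f (p ! k)) (f (p ! l))) + 1"
      using card_sym_diff_triangle[of "f (p ! k)" "f (p ! l)" "f (p ! Suc l)"]
        in_V finite_coordinates
      by simp
    also have "\<dots> \<le> Suc l - k"
      using Suc.IH \<open>k \<le> l\<close> Suc.prems by simp
    finally show ?thesis .
  qed simp
qed

text \<open>Equal flips of edges \<open>a\<close> and \<open>b\<close> cancel, so the ends of the geodesic would be
  closer than its length.\<close>

lemma geodesic_distinct_flips:
  assumes "geodesic V E p" "a < b" "Suc b < length p"
  shows "sym_diff (f (p ! a)) (f (p ! Suc a)) \<noteq> sym_diff (f (p ! b)) (f (p ! Suc b))"
proof
  assume same_flip: "sym_diff (f (p ! a)) (f (p ! Suc a)) = sym_diff (f (p ! b)) (f (p ! Suc b))"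
  define n where "n = length p - 1"
  have "p \<noteq> []" using assms(3) by auto
  then have walk: "walk V E p" and n_gdist: "n = gdist V E (p ! 0) (p ! n)"
    using assms(1) unfolding geodesic_def n_def by (auto simp: hd_conv_nth last_conv_nth)
  let ?d = "\<lambda>k l. card (sym_diff (f (p ! k)) (f (p ! l)))"
  have in_V: "p ! k \<in> V" if "k \<le> n" for k
    using walk_nth_in_vertices[OF walk] that assms(3) n_def by simp
  have bound: "?d k l \<le> l - k" if "k \<le> l" "l \<le> n" for k l
    using walk_card_sym_diff_le[OF walk that(1)] that(2) assms(3) n_def by simp
  have triangle: "?d k m \<le> ?d k l + ?d l m" if "k \<le> n" "l \<le> n" "m \<le> n" for k l m
    using that by (intro card_sym_diff_triangle finite_coordinates in_V)
  have "sym_diff (f (p ! a)) (f (p ! Suc b)) = sym_diff (f (p ! Suc a)) (f (p ! b))"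
    using same_flip unfolding set_eq_iff by blast
  then have cancel: "?d a (Suc b) = ?d (Suc a) b"
    by simp
  have "b < n"
    using assms(3) n_def by simp
  have "n = ?d 0 n"
    using n_gdist in_V isometric by simp
  also have "\<dots> \<le> ?d 0 a + ?d a (Suc b) + ?d (Suc b) n"
    using triangle[of 0 a n] triangle[of a "Suc b" n] \<open>a < b\<close> \<open>b < n\<close> by simp
  also have "\<dots> = ?d 0 a + ?d (Suc a) b + ?d (Suc b) n"
    using cancel by simp
  also have "\<dots> \<le> a + (b - Suc a) + (n - Suc b)"
    using bound[of 0 a] bound[of "Suc a" b] bound[of "Suc b" n] \<open>a < b\<close> \<open>b < n\<close> by simp
  finally show False
    using \<open>a < b\<close> \<open>b < n\<close> by simp
qed

lemma geodesic_Theta_unique: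
  assumes "geodesic V E p" "edge_on e\<^sub>1 p" "edge_on e\<^sub>2 p"
    and "Theta V E e e\<^sub>1" "Theta V E e e\<^sub>2"
  shows "e\<^sub>1 = e\<^sub>2"
proof -
  have walk: "walk V E p"
    using assms(1) unfolding geodesic_def by simp
  obtain a b where a: "Suc a < length p" "e\<^sub>1 = {p ! a, p ! Suc a}"
    and b: "Suc b < length p" "e\<^sub>2 = {p ! b, p ! Suc b}"
    using assms(2,3) unfolding edge_on_def by blast
  obtain c d where "e = {c, d}" "e \<in> E"
    using assms(4) simple unfolding Theta_def simple_graph_def by blast
  obtain k where k: "sym_diff (f c) (f d) = {k}"
    using edge_label \<open>e = {c, d}\<close> \<open>e \<in> E\<close> by blast
  have flip_k: "sym_diff (f (p ! m)) (f (p ! Suc m)) = {k}"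
    if m: "Suc m < length p" and Theta: "Theta V E e {p ! m, p ! Suc m}" for m
  proof -
    obtain i where i: "sym_diff (f (p ! m)) (f (p ! Suc m)) = {i}"
      using edge_label walk_nth_edge[OF walk m] by blast
    have "k = i"
      using Theta_same_label[OF _ k i] Theta \<open>e = {c, d}\<close> by simp
    with i show ?thesis by simp
  qed
  have "sym_diff (f (p ! a)) (f (p ! Suc a)) = sym_diff (f (p ! b)) (f (p ! Suc b))"
    using flip_k a b assms(4,5) by simp
  then have "a = b"
    using geodesic_distinct_flips[OF assms(1)] a(1) b(1) by (metis linorder_neqE_nat)
  then show ?thesis
    using a b by simp
qed

end

lemma partial_cube_hypercube_embedding:
  assumes "partial_cube V E"
  obtains f :: "'a \<Rightarrow> nat set" where "hypercube_embedding V E f"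
proof -
  obtain r and f :: "'a \<Rightarrow> nat set" where "\<forall>v\<in>V. f v \<subseteq> {0..<r}"
    and "\<forall>u\<in>V. \<forall>v\<in>V. gdist V E u v = card (sym_diff (f u) (f v))"
    using assms unfolding partial_cube_def by blast
  then have "hypercube_embedding V E f"
    using partial_cube_simple_graph[OF assms]
    by unfold_locales (auto intro: finite_subset)
  then show thesis ..
qed

lemma geodesic_Theta_class_unique:
  assumes "partial_cube V E" "Theta_class V E F" "geodesic V E p"
    and "e\<^sub>1 \<in> F" "e\<^sub>2 \<in> F" "edge_on e\<^sub>1 p" "edge_on e\<^sub>2 p"
  shows "e\<^sub>1 = e\<^sub>2"
proof -
  obtain f :: "'a \<Rightarrow> nat set" where "hypercube_embedding V E f"
    using partial_cube_hypercube_embedding[OF assms(1)] .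
  moreover obtain e where "F = {e' \<in> E. Theta V E e e'}"
    using assms(2) unfolding Theta_class_def by blast
  ultimately show ?thesis
    using hypercube_embedding.geodesic_Theta_unique assms(3-7) by blast
qed

theorem lemma3p1:
  fixes V :: "'a set" and E :: "'a set set" and F1 F2 :: "'a set set"
  assumes "partial_cube V E"
    and "Theta_class V E F1"
    and "Theta_class V E F2"
  shows "edge_general_position V E (F1 \<union> F2)"
proof -
  have "F1 \<union> F2 \<subseteq> E"
    using assms(2,3) unfolding Theta_class_def by blast
  moreover have "e\<^sub>1 = e\<^sub>2" if "geodesic V E p" "edge_on e\<^sub>1 p" "edge_on e\<^sub>2 p"
    and "e\<^sub>1 \<in> F" "e\<^sub>2 \<in> F" "F \<in> {F1, F2}" for p e\<^sub>1 e\<^sub>2 F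
    using geodesic_Theta_class_unique[OF assms(1)] assms(2,3) that by blast
  ultimately show ?thesis
    unfolding edge_general_position_def by blast
qed

end
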